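(* Let $\alpha \in \mathbb{R}_{>0}$ and let $M_\alpha = \{f(\alpha) \mid f(x) \in \mathbb{N}_0[x,x^{-1}]\}$, regarded as an additive monoid. The following statements are equivalent: (a) $1 \in \mathcal{A}(M_\alpha)$; (b) $\mathcal{A}(M_\alpha) = \{\alpha^n \mid n \in \mathbb{Z}\}$; (c) $M_\alpha$ is atomic. Moreover, suppose $\alpha \in \mathbb{R}_{>0} \setminus \{1\}$ is an algebraic number. If $M_\alpha$ is atomic, then neither of the two components in the minimal pair of $\alpha$ is a monic monomial (i.e., neither equals $x^n$ for some $n \in \mathbb{N}_0$).
   Context: $\mathbb{N}_0[x,x^{-1}]$ denotes the semiring of Laurent polynomials with coefficients in the nonnegative integers $\mathbb{N}_0$. For a (cancellative, commutative, reduced, additively written) monoid $M$, a nonzero element $a$ is an atom if $a = x+y$ with $x,y\in M$ implies $x=0$ or $y=0$; $\mathcal{A}(M)$ is the set of atoms, and $M$ is atomic if every nonzero element is a sum of atoms. For a monic polynomial $f(x) \in \mathbb{Q}[x]$, let $\ell$ be the smallest positive integer with $\ell f(x) \in \mathbb{Z}[x]$; the minimal pair of $f$ is the unique pair $(p(x),q(x))$ with $p(x),q(x) \in \mathbb{N}_0[x]$, $\ell f(x) = p(x) - q(x)$, and $p$ and $q$ having no monomials of the same degree in common. The minimal pair of a real algebraic number $\alpha$ is the minimal pair of its minimal polynomial over $\mathbb{Q}$. *)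

theory Defs
  imports "HOL-Computational_Algebra.Polynomial" "HOL-Computational_Algebra.Polynomial_Factorial" Complex_Main
begin

definition M_alpha :: "real \<Rightarrow> real set" where
  "M_alpha \<alpha> = {(\<Sum>i\<in>S. of_nat (c i) * \<alpha> powi i) | S c. finite (S :: int set)}"

definition atoms :: "real set \<Rightarrow> real set" where
  "atoms M = {a \<in> M. a \<noteq> 0 \<and> (\<forall>x\<in>M. \<forall>y\<in>M. a = x + y \<longrightarrow> x = 0 \<or> y = 0)}"

definition atomic :: "real set \<Rightarrow> bool" where
  "atomic M \<longleftrightarrow> (\<forall>a\<in>M. a \<noteq> 0 \<longrightarrow> (\<exists>xs. xs \<noteq> [] \<and> set xs \<subseteq> atoms M \<and> sum_list xs = a))"

definition is_min_poly :: "real \<Rightarrow> rat poly \<Rightarrow> bool" where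
  "is_min_poly \<alpha> p \<longleftrightarrow> lead_coeff p = 1 \<and> poly (map_poly of_rat p) \<alpha> = 0 \<and>
     (\<forall>q. q \<noteq> 0 \<and> poly (map_poly of_rat q) \<alpha> = 0 \<longrightarrow> degree p \<le> degree q)"

definition min_poly :: "real \<Rightarrow> rat poly" where
  "min_poly \<alpha> = (THE p. is_min_poly \<alpha> p)"

definition denom_lcm :: "rat poly \<Rightarrow> nat" where
  "denom_lcm f = (LEAST l::nat. l > 0 \<and> (\<forall>i. coeff (smult (of_nat l) f) i \<in> \<int>))"

definition is_minimal_pair :: "rat poly \<Rightarrow> nat poly \<Rightarrow> nat poly \<Rightarrow> bool" where
  "is_minimal_pair f p q \<longleftrightarrow>
     map_poly of_nat p - map_poly of_nat q = smult (of_nat (denom_lcm f)) f \<and>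
     (\<forall>i. coeff p i = 0 \<or> coeff q i = 0)"

end

theory Submission
  imports Defs
begin

text \<open>Every element of \<open>M_alpha \<alpha>\<close> is a finite sum of powers \<open>\<alpha> powi k\<close>, so an atom, which
  cannot be split as \<open>\<alpha> powi k + y\<close> with \<open>y \<noteq> 0\<close>, is a power of \<open>\<alpha>\<close>. Multiplication by
  \<open>\<alpha> powi k\<close> is an automorphism of the monoid, so if one power of \<open>\<alpha>\<close> is an atom then all
  are: the set of atoms is either empty or all of \<open>{\<alpha> powi n}\<close>, and each of (a), (b), (c)
  is equivalent to its being nonempty.

  If \<open>(p, q)\<close> is the minimal pair of \<open>\<alpha>\<close>, then \<open>p(\<alpha>) = q(\<alpha>)\<close>. Were \<open>p = x\<^sup>n\<close>, the atom
  \<open>\<alpha>\<^sup>n = q(\<alpha>)\<close> would split off the leading monomial \<open>x\<^sup>j\<close> of \<open>q\<close> with zero remainder,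
  and \<open>\<alpha> \<noteq> 1\<close> forces \<open>j = n\<close>; so \<open>q = x\<^sup>n\<close> as well, although \<open>p\<close> and \<open>q\<close> share no monomial.\<close>

lemma sum_list_map_eq_sum_of_nat_count:
  fixes f :: "'a \<Rightarrow> 'b::semiring_1"
  shows "sum_list (map f xs) = (\<Sum>x\<in>set xs. of_nat (count_list xs x) * f x)"
proof (induction xs)
  case (Cons x xs)
  have "of_nat (count_list (x # xs) y) * f y = of_nat (count_list xs y) * f y + (if x = y then f y else 0)"
    for y by (simp add: distrib_right add.commute)
  then have "(\<Sum>y\<in>set (x # xs). of_nat (count_list (x # xs) y) * f y)
      = (\<Sum>y\<in>insert x (set xs). of_nat (count_list xs y) * f y) + f x"
    by (simp add: sum.distrib)
  also have "(\<Sum>y\<in>insert x (set xs). of_nat (count_list xs y) * f y)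
      = (\<Sum>y\<in>set xs. of_nat (count_list xs y) * f y)"
    by (rule sum.mono_neutral_right) (auto simp: count_list_0_iff)
  finally show ?case using Cons by (simp add: add.commute)
qed simp

lemma mult_in_atomsI:
  fixes M :: "real set"
  assumes "c \<noteq> 0" "(*) c ` M = M" "a \<in> atoms M"
  shows "c * a \<in> atoms M"
proof -
  have "x = 0 \<or> y = 0" if "x \<in> M" "y \<in> M" "c * a = x + y" for x y
  proof -
    have "x / c \<in> M" "y / c \<in> M"
      using that(1,2) assms(1,2) by (metis image_iff nonzero_mult_div_cancel_left)+
    moreover have "a = x / c + y / c"
      using that(3) assms(1) by (simp add: field_simps)
    ultimately show ?thesis
      using assms(1,3) unfolding atoms_def by auto
  qed
  moreover have "c * a \<in> M" "c * a \<noteq> 0"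
    using assms unfolding atoms_def by auto
  ultimately show ?thesis
    unfolding atoms_def by blast
qed

lemma M_alpha_iff_sum_list:
  "x \<in> M_alpha \<alpha> \<longleftrightarrow> (\<exists>ks. x = sum_list (map (power_int \<alpha>) ks))"
proof
  assume "x \<in> M_alpha \<alpha>"
  then obtain S c where "finite S" and x: "x = (\<Sum>i\<in>S. of_nat (c i) * \<alpha> powi i)"
    unfolding M_alpha_def by blast
  have "\<exists>ks. (\<Sum>i\<in>S. of_nat (c i) * \<alpha> powi i) = sum_list (map (power_int \<alpha>) ks)"
    using \<open>finite S\<close>
  proof (induction S rule: finite_induct)
    case empty
    show ?case by (rule exI[of _ "[]"]) simp
  next
    case (insert i S)
    then obtain ks where "(\<Sum>i\<in>S. of_nat (c i) * \<alpha> powi i) = sum_list (map (power_int \<alpha>) ks)"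
      by blast
    with insert show ?case
      by (intro exI[of _ "replicate (c i) i @ ks"]) (simp add: sum_list_replicate)
  qed
  with x show "\<exists>ks. x = sum_list (map (power_int \<alpha>) ks)" by simp
next
  assume "\<exists>ks. x = sum_list (map (power_int \<alpha>) ks)"
  then obtain ks where "x = sum_list (map (power_int \<alpha>) ks)" by blast
  then have "x = (\<Sum>i\<in>set ks. of_nat (count_list ks i) * \<alpha> powi i)"
    by (simp add: sum_list_map_eq_sum_of_nat_count)
  then show "x \<in> M_alpha \<alpha>"
    unfolding M_alpha_def by blast
qed

lemma power_int_in_M_alpha: "\<alpha> powi k \<in> M_alpha \<alpha>"
  unfolding M_alpha_iff_sum_list by (intro exI[of _ "[k]"]) simp

lemma mult_power_int_in_M_alpha:
  assumes "\<alpha> \<noteq> 0" "x \<in> M_alpha \<alpha>"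
  shows "\<alpha> powi n * x \<in> M_alpha \<alpha>"
proof -
  obtain ks where "x = sum_list (map (power_int \<alpha>) ks)"
    using assms(2) unfolding M_alpha_iff_sum_list by blast
  then have "\<alpha> powi n * x = sum_list (map (power_int \<alpha>) (map ((+) n) ks))"
    by (simp add: sum_list_const_mult o_def power_int_add assms(1))
  then show ?thesis
    unfolding M_alpha_iff_sum_list by blast
qed

lemma M_alpha_nonzero_split:
  assumes "x \<in> M_alpha \<alpha>" "x \<noteq> 0"
  obtains k y where "y \<in> M_alpha \<alpha>" "x = \<alpha> powi k + y"
proof -
  obtain ks where x: "x = sum_list (map (power_int \<alpha>) ks)"
    using assms(1) unfolding M_alpha_iff_sum_list by blast
  with assms(2) obtain k ks' where "ks = k # ks'"
    by (cases ks) auto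
  with x show ?thesis
    using that M_alpha_iff_sum_list by auto
qed

lemma atoms_M_alpha_subset:
  assumes "\<alpha> \<noteq> 0"
  shows "atoms (M_alpha \<alpha>) \<subseteq> range (power_int \<alpha>)"
proof
  fix a assume a: "a \<in> atoms (M_alpha \<alpha>)"
  then have "a \<in> M_alpha \<alpha>" "a \<noteq> 0"
    unfolding atoms_def by auto
  then obtain k y where "y \<in> M_alpha \<alpha>" "a = \<alpha> powi k + y"
    by (rule M_alpha_nonzero_split)
  with a assms power_int_in_M_alpha have "y = 0"
    unfolding atoms_def by auto
  with \<open>a = \<alpha> powi k + y\<close> show "a \<in> range (power_int \<alpha>)" by simp
qed

lemma image_mult_power_int_M_alpha:
  assumes "\<alpha> \<noteq> 0"
  shows "(*) (\<alpha> powi n) ` M_alpha \<alpha> = M_alpha \<alpha>"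
proof (intro equalityI subsetI)
  fix x assume "x \<in> M_alpha \<alpha>"
  then have "\<alpha> powi (-n) * x \<in> M_alpha \<alpha>"
    by (rule mult_power_int_in_M_alpha[OF assms])
  moreover have "x = \<alpha> powi n * (\<alpha> powi (-n) * x)"
    using assms by (simp add: mult.assoc[symmetric] flip: power_int_add)
  ultimately show "x \<in> (*) (\<alpha> powi n) ` M_alpha \<alpha>" by blast
qed (auto simp: mult_power_int_in_M_alpha assms)

lemma atoms_M_alpha_empty_or_powers:
  assumes "\<alpha> \<noteq> 0"
  shows "atoms (M_alpha \<alpha>) = {} \<or> atoms (M_alpha \<alpha>) = range (power_int \<alpha>)"
proof (cases "atoms (M_alpha \<alpha>) = {}")
  case False
  then obtain k where k: "\<alpha> powi k \<in> atoms (M_alpha \<alpha>)"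
    using atoms_M_alpha_subset[OF assms] by blast
  have "\<alpha> powi n \<in> atoms (M_alpha \<alpha>)" for n
  proof -
    have "\<alpha> powi n = \<alpha> powi (n - k) * \<alpha> powi k"
      using assms by (simp flip: power_int_add)
    then show ?thesis
      using mult_in_atomsI[OF _ image_mult_power_int_M_alpha k] assms by simp
  qed
  then show ?thesis
    using atoms_M_alpha_subset[OF assms] by auto
qed simp

lemma atomic_M_alpha_iff:
  assumes "\<alpha> \<noteq> 0"
  shows "atomic (M_alpha \<alpha>) \<longleftrightarrow> atoms (M_alpha \<alpha>) \<noteq> {}"
proof
  assume "atomic (M_alpha \<alpha>)"
  moreover have "(1::real) \<in> M_alpha \<alpha>"
    using power_int_in_M_alpha[of \<alpha> 0] by simp
  ultimately obtain xs where "xs \<noteq> []" "set xs \<subseteq> atoms (M_alpha \<alpha>)"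
    unfolding atomic_def by fastforce
  then show "atoms (M_alpha \<alpha>) \<noteq> {}" by auto
next
  assume "atoms (M_alpha \<alpha>) \<noteq> {}"
  then have atoms: "atoms (M_alpha \<alpha>) = range (power_int \<alpha>)"
    using atoms_M_alpha_empty_or_powers[OF assms] by blast
  show "atomic (M_alpha \<alpha>)"
    unfolding atomic_def
  proof (intro ballI impI)
    fix x assume "x \<in> M_alpha \<alpha>" "x \<noteq> 0"
    then obtain ks where "x = sum_list (map (power_int \<alpha>) ks)"
      unfolding M_alpha_iff_sum_list by blast
    with \<open>x \<noteq> 0\<close> atoms show "\<exists>xs. xs \<noteq> [] \<and> set xs \<subseteq> atoms (M_alpha \<alpha>) \<and> sum_list xs = x"
      by (intro exI[of _ "map (power_int \<alpha>) ks"]) auto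
  qed
qed

lemma poly_nat_poly_in_M_alpha:
  "poly (map_poly of_nat r) \<alpha> \<in> M_alpha \<alpha>"
proof -
  have "poly (map_poly of_nat r) \<alpha> = (\<Sum>i\<le>degree r. of_nat (coeff r i) * \<alpha> ^ i)"
    by (simp add: poly_altdef coeff_map_poly degree_map_poly)
  also have "\<dots> = (\<Sum>i\<in>int ` {..degree r}. of_nat (coeff r (nat i)) * \<alpha> powi i)"
    by (simp add: sum.reindex)
  finally show ?thesis
    unfolding M_alpha_def
    by (intro CollectI exI[of _ "int ` {..degree r}"] exI[of _ "\<lambda>i. coeff r (nat i)"]) simp
qed

lemma poly_nat_poly_eq_0_iff:
  fixes \<alpha> :: real
  assumes "\<alpha> > 0"
  shows "poly (map_poly of_nat r) \<alpha> = 0 \<longleftrightarrow> r = 0"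
proof
  assume "poly (map_poly of_nat r) \<alpha> = 0"
  then have "(\<Sum>i\<le>degree r. of_nat (coeff r i) * \<alpha> ^ i) = 0"
    by (simp add: poly_altdef coeff_map_poly degree_map_poly)
  then have "of_nat (lead_coeff r) * \<alpha> ^ degree r = 0"
    using assms by (subst (asm) sum_nonneg_eq_0_iff) auto
  then show "r = 0"
    using assms by simp
qed simp

lemma nat_poly_eq_monom_if_eval_atom:
  fixes \<alpha> :: real and r :: "nat poly"
  assumes "\<alpha> > 0" "\<alpha> \<noteq> 1" "\<alpha> ^ n \<in> atoms (M_alpha \<alpha>)"
    and eval: "poly (map_poly of_nat r) \<alpha> = \<alpha> ^ n"
  shows "r = monom 1 n"
proof -
  define j where "j = degree r"
  \<comment> \<open>truncated subtraction of \<open>nat poly\<close>, exact here because \<open>lead_coeff r \<ge> 1\<close>\<close>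
  define s where "s = r - monom 1 j"
  have "r \<noteq> 0"
    using eval assms(1) by auto
  then have "1 \<le> lead_coeff r"
    by (metis leading_coeff_0_iff less_one not_le)
  then have "coeff (monom 1 j) i \<le> coeff r i" for i
    by (auto simp: j_def)
  then have r: "r = monom 1 j + s"
    unfolding s_def by (intro poly_eqI) (simp add: le_add_diff_inverse)
  have "map_poly (of_nat :: nat \<Rightarrow> real) r = monom 1 j + map_poly of_nat s"
    by (subst r, intro poly_eqI) (simp add: coeff_map_poly)
  then have split: "\<alpha> ^ n = \<alpha> ^ j + poly (map_poly of_nat s) \<alpha>"
    by (simp add: eval[symmetric] poly_monom)
  have "\<alpha> ^ j \<in> M_alpha \<alpha>" "\<alpha> ^ j \<noteq> 0"
    using power_int_in_M_alpha[of \<alpha> "int j"] assms(1) by simp_all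
  with assms(3) split poly_nat_poly_in_M_alpha[of s \<alpha>]
  have "poly (map_poly of_nat s) \<alpha> = 0"
    unfolding atoms_def by blast
  then have "s = 0"
    using poly_nat_poly_eq_0_iff[OF assms(1)] by blast
  moreover have "n = j"
    using split \<open>poly (map_poly of_nat s) \<alpha> = 0\<close> power_inject_exp'[OF assms(2,1)] by simp
  ultimately show ?thesis
    using r by simp
qed

lemma map_poly_of_rat_diff:
  "map_poly (of_rat :: rat \<Rightarrow> 'a::field_char_0) (p - q) = map_poly of_rat p - map_poly of_rat q"
  by (intro poly_eqI) (simp add: coeff_map_poly of_rat_diff)

lemma is_min_poly_unique:
  assumes "is_min_poly \<alpha> p1" "is_min_poly \<alpha> p2"
  shows "p1 = p2"
proof (rule ccontr)
  assume "p1 \<noteq> p2"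
  have lc: "lead_coeff p1 = 1" "lead_coeff p2 = 1"
    and root: "poly (map_poly of_rat p1) \<alpha> = 0" "poly (map_poly of_rat p2) \<alpha> = 0"
    and least: "\<And>q. q \<noteq> 0 \<Longrightarrow> poly (map_poly of_rat q) \<alpha> = 0 \<Longrightarrow> degree p1 \<le> degree q"
      "\<And>q. q \<noteq> 0 \<Longrightarrow> poly (map_poly of_rat q) \<alpha> = 0 \<Longrightarrow> degree p2 \<le> degree q"
    using assms unfolding is_min_poly_def by blast+
  then have deg: "degree p1 = degree p2"
    by (metis le_antisym leading_coeff_0_iff zero_neq_one)
  have "degree p1 \<le> degree (p1 - p2)"
    using \<open>p1 \<noteq> p2\<close> root by (intro least(1)) (simp_all add: map_poly_of_rat_diff)
  moreover have "degree (p1 - p2) \<le> degree p1"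
    using deg degree_diff_le_max[of p1 p2] by simp
  ultimately have "lead_coeff (p1 - p2) = lead_coeff p1 - lead_coeff p2"
    using deg by simp
  also have "\<dots> = 0"
    using lc by simp
  finally show False
    using \<open>p1 \<noteq> p2\<close> leading_coeff_0_iff[of "p1 - p2"] by simp
qed

lemma is_min_poly_exists:
  fixes \<alpha> :: real
  assumes "algebraic \<alpha>"
  shows "\<exists>p. is_min_poly \<alpha> p"
proof -
  define root where "root = (\<lambda>q::rat poly. q \<noteq> 0 \<and> poly (map_poly of_rat q) \<alpha> = 0)"
  obtain p :: "real poly" where p: "\<forall>i. coeff p i \<in> \<rat>" "p \<noteq> 0" "poly p \<alpha> = 0"
    using assms unfolding algebraic_altdef by blast
  then obtain q where "p = map_poly of_rat q"
    using ratpolyE by metis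
  with p have "root q"
    unfolding root_def by auto
  then obtain q0 where q0: "root q0" and least: "\<And>q. root q \<Longrightarrow> degree q0 \<le> degree q"
    using ex_has_least_nat[of root q degree] by blast
  define m where "m = smult (inverse (lead_coeff q0)) q0"
  have "lead_coeff q0 \<noteq> 0"
    using q0 unfolding root_def by simp
  then have "lead_coeff m = 1" "degree m = degree q0"
    unfolding m_def by simp_all
  moreover have "poly (map_poly of_rat m) \<alpha> = 0"
    using q0 unfolding m_def root_def by (simp add: map_poly_smult of_rat_mult)
  ultimately have "is_min_poly \<alpha> m"
    using least unfolding is_min_poly_def root_def by simp
  then show ?thesis ..
qed

lemma min_poly_root:
  fixes \<alpha> :: real
  assumes "algebraic \<alpha>"
  shows "poly (map_poly of_rat (min_poly \<alpha>)) \<alpha> = 0"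
proof -
  have "is_min_poly \<alpha> (min_poly \<alpha>)"
    unfolding min_poly_def using is_min_poly_exists[OF assms] is_min_poly_unique
    by (metis theI)
  then show ?thesis
    unfolding is_min_poly_def by blast
qed

lemma poly_minimal_pair_eq:
  fixes \<alpha> :: real
  assumes "is_minimal_pair f p q" "poly (map_poly of_rat f) \<alpha> = 0"
  shows "poly (map_poly of_nat p) \<alpha> = poly (map_poly of_nat q) \<alpha>"
proof -
  have "map_poly of_nat p - map_poly of_nat q
      = map_poly (of_rat :: rat \<Rightarrow> real) (map_poly of_nat p - map_poly of_nat q)"
    by (simp add: map_poly_of_rat_diff map_poly_map_poly o_def)
  also have "\<dots> = smult (of_nat (denom_lcm f)) (map_poly of_rat f)"
    using assms(1) unfolding is_minimal_pair_def by (simp add: map_poly_smult of_rat_mult)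
  finally have "poly (map_poly of_nat p - map_poly of_nat q) \<alpha> = 0"
    using assms(2) by simp
  then show ?thesis
    by simp
qed

lemma not_monom_if_same_eval_disjoint_coeffs:
  fixes \<alpha> :: real
  assumes "\<alpha> > 0" "\<alpha> \<noteq> 1" "atoms (M_alpha \<alpha>) = range (power_int \<alpha>)"
    and eval: "poly (map_poly of_nat p) \<alpha> = poly (map_poly of_nat q) \<alpha>"
    and disjoint: "\<forall>i. coeff p i = 0 \<or> coeff q i = 0"
  shows "p \<noteq> monom 1 n"
proof
  assume p: "p = monom 1 n"
  then have "poly (map_poly of_nat q) \<alpha> = \<alpha> ^ n"
    using eval by (simp add: map_poly_monom poly_monom)
  moreover have "\<alpha> ^ n \<in> atoms (M_alpha \<alpha>)"
    using assms(3) rangeI[of "power_int \<alpha>" "int n"] by simp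
  ultimately have "q = monom 1 n"
    using nat_poly_eq_monom_if_eval_atom[OF assms(1,2)] by blast
  with p show False
    using disjoint[rule_format, of n] by simp
qed

lemma minimal_pair_not_monom_if_atomic:
  fixes \<alpha> :: real
  assumes "\<alpha> > 0" "\<alpha> \<noteq> 1" "algebraic \<alpha>" "atomic (M_alpha \<alpha>)"
    and pair: "is_minimal_pair (min_poly \<alpha>) p q"
  shows "p \<noteq> monom 1 n" "q \<noteq> monom 1 n"
proof -
  have "\<alpha> \<noteq> 0"
    using assms(1) by simp
  then have atoms: "atoms (M_alpha \<alpha>) = range (power_int \<alpha>)"
    using assms(4) atomic_M_alpha_iff atoms_M_alpha_empty_or_powers by metis
  have eval: "poly (map_poly of_nat p) \<alpha> = poly (map_poly of_nat q) \<alpha>"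
    using poly_minimal_pair_eq[OF pair min_poly_root[OF assms(3)]] .
  have disjoint: "\<forall>i. coeff p i = 0 \<or> coeff q i = 0"
    using pair unfolding is_minimal_pair_def by (elim conjE)
  then have disjoint': "\<forall>i. coeff q i = 0 \<or> coeff p i = 0"
    by (simp add: disj_commute)
  show "p \<noteq> monom 1 n"
    by (rule not_monom_if_same_eval_disjoint_coeffs[OF assms(1,2) atoms eval disjoint])
  show "q \<noteq> monom 1 n"
    by (rule not_monom_if_same_eval_disjoint_coeffs[OF assms(1,2) atoms eval[symmetric] disjoint'])
qed

theorem theorem3p1:
  fixes \<alpha> :: real
  assumes "\<alpha> > 0"
  shows "((1 \<in> atoms (M_alpha \<alpha>)) \<longleftrightarrow> atoms (M_alpha \<alpha>) = {\<alpha> powi n | n. True})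
       \<and> (atoms (M_alpha \<alpha>) = {\<alpha> powi n | n. True} \<longleftrightarrow> atomic (M_alpha \<alpha>))
       \<and> (\<alpha> \<noteq> 1 \<longrightarrow> algebraic \<alpha> \<longrightarrow> atomic (M_alpha \<alpha>) \<longrightarrow>
           (\<forall>p q. is_minimal_pair (min_poly \<alpha>) p q \<longrightarrow>
              (\<forall>n. p \<noteq> monom 1 n \<and> q \<noteq> monom 1 n)))"
proof -
  have "\<alpha> \<noteq> 0"
    using assms by simp
  have powers: "{\<alpha> powi n | n. True} = range (power_int \<alpha>)"
    by auto
  have "1 \<in> range (power_int \<alpha>)"
    by (metis power_int_0_right rangeI)
  then have "1 \<in> atoms (M_alpha \<alpha>) \<longleftrightarrow> atoms (M_alpha \<alpha>) = range (power_int \<alpha>)"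
    and "atoms (M_alpha \<alpha>) = range (power_int \<alpha>) \<longleftrightarrow> atomic (M_alpha \<alpha>)"
    using atoms_M_alpha_empty_or_powers[OF \<open>\<alpha> \<noteq> 0\<close>] atomic_M_alpha_iff[OF \<open>\<alpha> \<noteq> 0\<close>] by auto
  moreover have "\<alpha> \<noteq> 1 \<longrightarrow> algebraic \<alpha> \<longrightarrow> atomic (M_alpha \<alpha>) \<longrightarrow>
      (\<forall>p q. is_minimal_pair (min_poly \<alpha>) p q \<longrightarrow> (\<forall>n. p \<noteq> monom 1 n \<and> q \<noteq> monom 1 n))"
    using minimal_pair_not_monom_if_atomic[OF assms] by blast
  ultimately show ?thesis
    unfolding powers by (intro conjI)
qed

end
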